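(* Assume (A1)–(A3). Fix sequences $(E_m)_{m\ge0},(K_m)_{m\ge0}\subset\mathbb N$ with $E_{\max}=\sup_mE_m<\infty$, $K_{\max}=\sup_mK_m<\infty$, $E_{\min}=\inf_mE_m$, $K_{\min}=\inf_mK_m$. For $M\in\mathbb N$ let $T=\sum_{m=0}^MK_mE_m$. Let $\delta,\gamma>1$ with $\gamma^2<\delta$ and set $\hat\gamma=\gamma^2/\delta<1$. Consider mini-batch SGD with, for $m\in[0:M]$ and $t\in S_m$, $$b_t=\delta^{m\lceil t/\sum_{k=0}^mK_kE_k\rceil}b_0,\qquad \eta_t=\gamma^{m\lceil t/\sum_{k=0}^mK_kE_k\rceil}\eta_0$$ ($b_0,\eta_0>0$), and assume $\eta_t\in[\eta_{\min},\eta_{\max}]\subset[0,\frac2{\bar L})$. Then for all $M\in\mathbb N$, $$\min_{t\in[0:T-1]}\mathbb E\big[\|\nabla f(\theta_t)\|^2\big]\le\frac{2(f(\theta_0)-\underline f^\star)}{2-\bar L\eta_{\max}}B_T+\frac{\bar L\sigma^2}{2-\bar L\eta_{\max}}V_T,$$ where $B_T=\frac1{\sum_{t=0}^{T-1}\eta_t}\le\frac{\delta}{\eta_0K_{\min}E_{\min}\gamma^M}$ and $V_T=\frac1{\sum_{t=0}^{T-1}\eta_t}\sum_{t=0}^{T-1}\frac{\eta_t^2}{b_t}\le\frac{K_{\max}E_{\max}\eta_0\delta}{K_{\min}E_{\min}b_0(1-\hat\gamma)\gamma^M}$. Consequently $\min_{t\in[0:T-1]}\mathbb E[\|\nabla 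f(\theta_t)\|]=O(1/\gamma^{M/2})$.
   Context: Setting: $f_1,\dots,f_n:\mathbb R^d\to\mathbb R$, $f=\frac1n\sum_if_i$. (A1) each $f_i$ differentiable and $L_i$-smooth ($\nabla f_i$ $L_i$-Lipschitz, $L_i>0$), $f_i^\star:=\inf f_i\in\mathbb R$. (A2) $\xi$ a random variable independent of $\theta$, stochastic gradient $\nabla f_\xi$ with $\mathbb E_\xi[\nabla f_\xi(\theta)]=\nabla f(\theta)$, $\mathbb E_\xi\|\nabla f_\xi(\theta)-\nabla f(\theta)\|^2\le\sigma^2$ for all $\theta$. (A3) for batch size $b$, $(\xi_1,\dots,\xi_b)$ i.i.d. copies of $\xi$ independent of $\theta$, $\nabla f_B(\theta)=\frac1b\sum_{i=1}^b\nabla f_{\xi_i}(\theta)$. Mini-batch SGD: from $\theta_0$, at step $t$ draw $\xi_t=(\xi_{t,1},\dots,\xi_{t,b_t})$ as in (A3), independent of $\theta_t$ and earlier draws, set $\theta_{t+1}=\theta_t-\eta_t\frac1{b_t}\sum_{i=1}^{b_t}\nabla f_{\xi_{t,i}}(\theta_t)$. $\mathbb E$ total expectation; $\bar L=\frac1n\sum L_i$, $\underline f^\star=\frac1n\sum f_i^\star$; $[0:N]=\{0,\dots,N\}$. Stages: $E_m$ epochs and $K_m$ steps per epoch in stage $m$; $S_0=\{t\in\mathbb Z_{\ge0}:t<K_0E_0\}$, $S_m=\{t\in\mathbb Z_{\ge0}:\sum_{k=0}^{m-1}K_kE_k\le t<\sum_{k=0}^mK_kE_k\}$. $O(\cdot)$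 is as $M\to\infty$. *)

theory Defs
  imports "HOL-Probability.Probability"
begin

text \<open>End (exclusive) of stage m: sum_{k=0}^m K_k E_k.  Also T = stage_end K E M.\<close>
definition stage_end :: "(nat \<Rightarrow> nat) \<Rightarrow> (nat \<Rightarrow> nat) \<Rightarrow> nat \<Rightarrow> nat" where
  "stage_end K E m = (\<Sum>k\<le>m. K k * E k)"

definition stage :: "(nat \<Rightarrow> nat) \<Rightarrow> (nat \<Rightarrow> nat) \<Rightarrow> nat \<Rightarrow> nat set" where
  "stage K E m = {t. (\<Sum>k<m. K k * E k) \<le> t \<and> t < stage_end K E m}"

definition sched_exp :: "(nat \<Rightarrow> nat) \<Rightarrow> (nat \<Rightarrow> nat) \<Rightarrow> nat \<Rightarrow> nat \<Rightarrow> nat" where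
  "sched_exp K E m t = m * nat \<lceil>real t / real (stage_end K E m)\<rceil>"

fun sgd_iter :: "'a::real_normed_vector \<Rightarrow> (nat \<Rightarrow> real) \<Rightarrow> (nat \<Rightarrow> nat)
    \<Rightarrow> ('b \<Rightarrow> 'a \<Rightarrow> 'a) \<Rightarrow> (nat \<Rightarrow> nat \<Rightarrow> 'w \<Rightarrow> 'b) \<Rightarrow> nat \<Rightarrow> 'w \<Rightarrow> 'a" where
  "sgd_iter \<theta>0 \<eta> b G \<xi> 0 \<omega> = \<theta>0"
| "sgd_iter \<theta>0 \<eta> b G \<xi> (Suc t) \<omega> =
     sgd_iter \<theta>0 \<eta> b G \<xi> t \<omega>
     - (\<eta> t / real (b t)) *\<^sub>R (\<Sum>i<b t. G (\<xi> t i \<omega>) (sgd_iter \<theta>0 \<eta> b G \<xi> t \<omega>))"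

end

theory Submission
  imports Defs
begin

(* Smoothness of the average f gives the descent inequality
     f y <= f x + <grad f x, y - x> + Lbar/2 |y - x|^2.
   For one step from a fixed point x with a batch of b independent unbiased samples, the
   cross terms of distinct samples factor, so the mini-batch second moment is at most
   |grad f x|^2 + sigma^2/b, and
     E f(x - eta g_B) + (eta - Lbar eta^2/2) |grad f x|^2 <= f x + Lbar eta^2 sigma^2/(2b).
   The iterate theta_t depends only on the batches of earlier steps, hence is independent of
   the batch of step t; freezing theta_t turns the inequality into one between expectations.
   Telescoping over t < T with eta - Lbar eta^2/2 >= (2 - Lbar eta_max) eta/2 bounds the
   minimum of E |grad f(theta_t)|^2 by the combination of B_T and V_T.  On stage m the schedule
   is eta_t = gamma^m eta_0 and b_t = delta^m b_0, so sum eta_t >= K_M E_M gamma^M eta_0 while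
   sum eta_t^2/b_t is a geometric series with ratio gamma^2/delta < 1.  Finally
   E |grad f| <= (E |grad f|^2)^(1/2) by Cauchy-Schwarz. *)

section \<open>Descent inequality\<close>

lemma lipschitz_gradient_descent_inequality:
  fixes f :: "'a::real_inner \<Rightarrow> real"
  assumes deriv: "\<And>x. (f has_derivative (\<lambda>h. g x \<bullet> h)) (at x)"
    and lip: "\<And>x y. norm (g x - g y) \<le> L * norm (x - y)"
  shows "f y \<le> f x + g x \<bullet> (y - x) + L / 2 * (norm (y - x))\<^sup>2"
proof -
  define d where "d = y - x"
  define \<phi> where "\<phi> s = f (x + s *\<^sub>R d) - s * (g x \<bullet> d) - L / 2 * s\<^sup>2 * (norm d)\<^sup>2" for s :: real
  have \<phi>_deriv: "DERIV \<phi> s :> g (x + s *\<^sub>R d) \<bullet> d - g x \<bullet> d - L * s * (norm d)\<^sup>2" for s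
  proof -
    have "((\<lambda>s. f (x + s *\<^sub>R d)) has_derivative (\<lambda>h. g (x + s *\<^sub>R d) \<bullet> (h *\<^sub>R d))) (at s)"
      by (rule has_derivative_compose[OF _ deriv]) (auto intro!: derivative_eq_intros)
    then have "((\<lambda>s. f (x + s *\<^sub>R d)) has_real_derivative g (x + s *\<^sub>R d) \<bullet> d) (at s)"
      by (simp add: has_field_derivative_def mult_commute_abs)
    then show ?thesis unfolding \<phi>_def
      by (auto intro!: derivative_eq_intros simp: power2_eq_square algebra_simps)
  qed
  have "\<phi> 1 \<le> \<phi> 0"
  proof (rule DERIV_nonpos_imp_nonincreasing[of 0 1])
    fix s :: real assume s: "0 \<le> s" "s \<le> 1"
    have "g (x + s *\<^sub>R d) \<bullet> d - g x \<bullet> d \<le> norm (g (x + s *\<^sub>R d) - g x) * norm d"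
      by (metis inner_diff_left norm_cauchy_schwarz)
    also have "\<dots> \<le> L * s * (norm d)\<^sup>2"
      using mult_right_mono[OF lip[of "x + s *\<^sub>R d" x] norm_ge_zero[of d]] s
      by (simp add: power2_eq_square)
    finally show "\<exists>y. DERIV \<phi> s :> y \<and> y \<le> 0"
      using \<phi>_deriv[of s] by (intro exI[of _ "_"] conjI) auto
  qed simp
  then show ?thesis unfolding \<phi>_def d_def by (simp add: algebra_simps)
qed

lemma average_descent_inequality:
  fixes f :: "nat \<Rightarrow> 'a::real_inner \<Rightarrow> real"
  assumes "\<And>i x. i < n \<Longrightarrow> (f i has_derivative (\<lambda>h. g i x \<bullet> h)) (at x)"
    and "\<And>i x y. i < n \<Longrightarrow> norm (g i x - g i y) \<le> L i * norm (x - y)"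
  shows "(\<Sum>i<n. f i y) / n \<le> (\<Sum>i<n. f i x) / n + ((1 / n) *\<^sub>R (\<Sum>i<n. g i x)) \<bullet> (y - x)
           + (\<Sum>i<n. L i) / n / 2 * (norm (y - x))\<^sup>2"
proof -
  have "(\<Sum>i<n. f i y) \<le> (\<Sum>i<n. f i x + g i x \<bullet> (y - x) + L i / 2 * (norm (y - x))\<^sup>2)"
    using assms by (intro sum_mono lipschitz_gradient_descent_inequality) auto
  also have "\<dots> = (\<Sum>i<n. f i x) + (\<Sum>i<n. g i x) \<bullet> (y - x) + (\<Sum>i<n. L i) / 2 * (norm (y - x))\<^sup>2"
    by (simp add: sum.distrib inner_sum_left sum_distrib_right sum_divide_distrib)
  finally have "(\<Sum>i<n. f i y) / n \<le> ((\<Sum>i<n. f i x) + (\<Sum>i<n. g i x) \<bullet> (y - x)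
      + (\<Sum>i<n. L i) / 2 * (norm (y - x))\<^sup>2) / n"
    by (rule divide_right_mono) simp
  then show ?thesis by (simp add: add_divide_distrib)
qed

lemma descent_coefficient_nonneg:
  fixes L \<eta> :: real
  assumes "0 \<le> \<eta>" "L * \<eta> \<le> 2"
  shows "0 \<le> \<eta> - L * \<eta>\<^sup>2 / 2"
  using mult_left_mono[OF assms(2,1)] by (simp add: power2_eq_square mult.commute mult.left_commute)

section \<open>Stagewise schedule\<close>

definition stage_start :: "(nat \<Rightarrow> nat) \<Rightarrow> (nat \<Rightarrow> nat) \<Rightarrow> nat \<Rightarrow> nat" where
  "stage_start K E m = (\<Sum>k<m. K k * E k)"

lemma stage_start_Suc: "stage_start K E (Suc m) = stage_end K E m"
  unfolding stage_start_def stage_end_def by (simp add: lessThan_Suc_atMost)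

lemma stage_end_eq: "stage_end K E m = stage_start K E m + K m * E m"
  by (metis stage_start_Suc stage_start_def sum.lessThan_Suc)

lemma mem_stage_iff: "t \<in> stage K E m \<longleftrightarrow> stage_start K E m \<le> t \<and> t < stage_end K E m"
  unfolding stage_def stage_start_def by simp

lemma stage_start_ge:
  assumes "\<And>m. 0 < K m * E m"
  shows "m \<le> stage_start K E m"
proof (induction m)
  case (Suc m)
  have "0 < K m * E m" by (rule assms)
  with Suc show ?case by (simp only: stage_start_Suc stage_end_eq)
qed simp

lemma sched_exp_on_stage:
  assumes "\<And>m. 0 < K m * E m" and t: "t \<in> stage K E m"
  shows "sched_exp K E m t = m"
proof (cases "m = 0")
  case False
  have "0 < t" "t < stage_end K E m"
    using t stage_start_ge[of K E m] assms(1) False by (auto simp: mem_stage_iff)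
  then have "\<lceil>real t / real (stage_end K E m)\<rceil> = 1"
    by (simp add: ceiling_eq_iff)
  then show ?thesis by (simp add: sched_exp_def)
qed (simp add: sched_exp_def)

lemma ex_stage:
  assumes "\<And>m. 0 < K m * E m"
  shows "\<exists>m. t \<in> stage K E m"
proof -
  let ?m = "LEAST m. t < stage_end K E m"
  have "t < stage_end K E t"
    using stage_start_ge[of K E "Suc t"] assms by (simp add: stage_start_Suc)
  then have "t < stage_end K E ?m" by (rule LeastI)
  moreover have "stage_start K E ?m \<le> t"
  proof (cases ?m)
    case (Suc m)
    then have "\<not> t < stage_end K E m" by (metis lessI not_less_Least)
    then show ?thesis using Suc by (simp add: stage_start_Suc)
  qed (simp add: stage_start_def)
  ultimately show ?thesis by (auto simp: mem_stage_iff)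
qed

lemma sum_upto_stage_start:
  fixes \<phi> :: "nat \<Rightarrow> real"
  assumes "\<And>m t. m < M \<Longrightarrow> t \<in> stage K E m \<Longrightarrow> \<phi> t = \<psi> m"
  shows "(\<Sum>t<stage_start K E M. \<phi> t) = (\<Sum>m<M. real (K m * E m) * \<psi> m)"
  using assms
proof (induction M)
  case (Suc M)
  have "stage_start K E M \<le> stage_end K E M" by (simp add: stage_end_eq)
  then have "(\<Sum>t<stage_end K E M. \<phi> t)
      = (\<Sum>t<stage_start K E M. \<phi> t) + (\<Sum>t\<in>{stage_start K E M..<stage_end K E M}. \<phi> t)"
    by (metis atLeast0LessThan le0 sum.atLeastLessThan_concat)
  also have "(\<Sum>t\<in>{stage_start K E M..<stage_end K E M}. \<phi> t) = real (K M * E M) * \<psi> M"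
    using Suc.prems[of M] by (simp add: mem_stage_iff stage_end_eq)
  finally show ?case using Suc by (simp add: stage_start_Suc)
qed (simp add: stage_start_def)

lemma sum_step_sizes_ge:
  assumes \<eta>: "\<And>m t. t \<in> stage K E m \<Longrightarrow> \<eta> t = \<gamma> ^ m * \<eta>0"
    and "0 \<le> \<gamma>" "0 \<le> \<eta>0"
  shows "real (K M * E M) * (\<gamma> ^ M * \<eta>0) \<le> (\<Sum>t<stage_end K E M. \<eta> t)"
proof -
  have "(\<Sum>t<stage_end K E M. \<eta> t) = (\<Sum>m<Suc M. real (K m * E m) * (\<gamma> ^ m * \<eta>0))"
    unfolding stage_start_Suc[symmetric] by (rule sum_upto_stage_start) (use \<eta> in blast)
  also have "real (K M * E M) * (\<gamma> ^ M * \<eta>0) \<le> \<dots>"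
    by (rule member_le_sum) (use assms(2,3) in auto)
  finally show ?thesis .
qed

lemma sum_sq_step_sizes_over_batch_le:
  assumes \<eta>: "\<And>m t. t \<in> stage K E m \<Longrightarrow> \<eta> t = \<gamma> ^ m * \<eta>0"
    and b: "\<And>m t. t \<in> stage K E m \<Longrightarrow> real (b t) = \<delta> ^ m * b0"
    and KE: "\<And>m. real (K m * E m) \<le> B"
    and "0 < \<delta>" "\<gamma>\<^sup>2 < \<delta>" "0 < b0"
  shows "(\<Sum>t<stage_end K E M. (\<eta> t)\<^sup>2 / real (b t)) \<le> B * \<eta>0\<^sup>2 / (b0 * (1 - \<gamma>\<^sup>2 / \<delta>))"
proof -
  define q where "q = \<gamma>\<^sup>2 / \<delta>"
  have q: "0 \<le> q" "q < 1" using assms(4,5) by (auto simp: q_def)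
  have "(\<Sum>t<stage_end K E M. (\<eta> t)\<^sup>2 / real (b t))
      = (\<Sum>m<Suc M. real (K m * E m) * (\<eta>0\<^sup>2 / b0 * q ^ m))"
    unfolding stage_start_Suc[symmetric]
    by (rule sum_upto_stage_start)
       (simp add: \<eta> b q_def power_divide power_mult_distrib ac_simps flip: power_mult power_even_eq)
  also have "\<dots> \<le> (\<Sum>m<Suc M. B * (\<eta>0\<^sup>2 / b0 * q ^ m))"
    using KE q assms(6) by (intro sum_mono mult_right_mono) auto
  also have "\<dots> = B * (\<eta>0\<^sup>2 / b0 * (\<Sum>m<Suc M. q ^ m))"
    by (simp only: sum_distrib_left)
  also have "\<dots> \<le> B * (\<eta>0\<^sup>2 / b0 * (1 / (1 - q)))"
  proof -
    have "(\<Sum>m<Suc M. q ^ m) = (1 - q ^ Suc M) / (1 - q)"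
      using q by (subst sum_gp_strict) simp
    also have "\<dots> \<le> 1 / (1 - q)"
      using q by (intro divide_right_mono) auto
    moreover have "0 \<le> B" using KE[of 0] of_nat_0_le_iff order_trans by blast
    ultimately show ?thesis
      using assms(6) by (intro mult_left_mono) auto
  qed
  finally show ?thesis by (simp add: q_def)
qed

lemma stagewise_schedule_bounds:
  fixes Kmin Emin Kmax Emax :: real
  assumes \<eta>: "\<And>m t. t \<in> stage K E m \<Longrightarrow> \<eta> t = \<gamma> ^ m * \<eta>0"
    and b: "\<And>m t. t \<in> stage K E m \<Longrightarrow> real (b t) = \<delta> ^ m * b0"
    and K: "\<And>m. Kmin \<le> K m" "\<And>m. K m \<le> Kmax" and E: "\<And>m. Emin \<le> E m" "\<And>m. E m \<le> Emax"
    and "0 < Kmin" "0 < Emin" "1 < \<delta>" "0 < \<gamma>" "\<gamma>\<^sup>2 < \<delta>" "0 < b0" "0 < \<eta>0"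
  shows "0 < (\<Sum>t<stage_end K E M. \<eta> t)"
    and "1 / (\<Sum>t<stage_end K E M. \<eta> t) \<le> \<delta> / (\<eta>0 * Kmin * Emin * \<gamma> ^ M)"
    and "1 / (\<Sum>t<stage_end K E M. \<eta> t) * (\<Sum>t<stage_end K E M. (\<eta> t)\<^sup>2 / real (b t))
         \<le> Kmax * Emax * \<eta>0 * \<delta> / (Kmin * Emin * b0 * (1 - \<gamma>\<^sup>2 / \<delta>) * \<gamma> ^ M)"
proof -
  let ?S = "\<Sum>t<stage_end K E M. \<eta> t"
  let ?V = "\<Sum>t<stage_end K E M. (\<eta> t)\<^sup>2 / real (b t)"
  have low_pos: "0 < \<eta>0 * Kmin * Emin * \<gamma> ^ M" using assms by simp
  have "\<eta>0 * Kmin * Emin * \<gamma> ^ M \<le> real (K M * E M) * (\<gamma> ^ M * \<eta>0)"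
    using K(1)[of M] E(1)[of M] assms by (simp add: mult_mono mult.commute mult.left_commute)
  also have "\<dots> \<le> ?S" using assms by (intro sum_step_sizes_ge[OF \<eta>]) auto
  finally have S_ge: "\<eta>0 * Kmin * Emin * \<gamma> ^ M \<le> ?S" .
  then show S_pos: "0 < ?S" using low_pos by linarith
  have "1 / ?S \<le> 1 / (\<eta>0 * Kmin * Emin * \<gamma> ^ M)"
    using S_ge low_pos by (simp add: frac_le)
  \<comment> \<open>The factor \<open>\<delta> > 1\<close> only weakens the bounds; it is there to match the stated rates.\<close>
  also have "\<dots> \<le> \<delta> / (\<eta>0 * Kmin * Emin * \<gamma> ^ M)"
    using low_pos assms by (intro divide_right_mono) auto
  finally show "1 / ?S \<le> \<delta> / (\<eta>0 * Kmin * Emin * \<gamma> ^ M)" .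
  have KE: "real (K m * E m) \<le> Kmax * Emax" for m
    using K E \<open>0 < Kmin\<close> \<open>0 < Emin\<close> by (simp add: mult_mono' order_trans[OF less_imp_le])
  have ratio: "0 < 1 - \<gamma>\<^sup>2 / \<delta>" using assms by simp
  have "1 / ?S * ?V \<le> 1 / (\<eta>0 * Kmin * Emin * \<gamma> ^ M) * (Kmax * Emax * \<eta>0\<^sup>2 / (b0 * (1 - \<gamma>\<^sup>2 / \<delta>)))"
  proof (rule mult_mono)
    show "1 / ?S \<le> 1 / (\<eta>0 * Kmin * Emin * \<gamma> ^ M)" using S_ge low_pos by (simp add: frac_le)
    show "?V \<le> Kmax * Emax * \<eta>0\<^sup>2 / (b0 * (1 - \<gamma>\<^sup>2 / \<delta>))"
      using assms by (intro sum_sq_step_sizes_over_batch_le[OF \<eta> b KE]) auto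
  qed (use low_pos in \<open>auto intro: sum_nonneg\<close>)
  also have "\<dots> = Kmax * Emax * \<eta>0 / (Kmin * Emin * b0 * (1 - \<gamma>\<^sup>2 / \<delta>) * \<gamma> ^ M)"
    using low_pos ratio by (simp add: field_simps power2_eq_square)
  also have "\<dots> \<le> Kmax * Emax * \<eta>0 * \<delta> / (Kmin * Emin * b0 * (1 - \<gamma>\<^sup>2 / \<delta>) * \<gamma> ^ M)"
  proof (rule divide_right_mono)
    have "0 \<le> Kmax * Emax * \<eta>0"
      using K E assms by (meson less_imp_le mult_nonneg_nonneg of_nat_0_le_iff order_trans)
    then show "Kmax * Emax * \<eta>0 \<le> Kmax * Emax * \<eta>0 * \<delta>"
      using assms by (simp add: mult_le_cancel_left1)
  qed (use assms ratio in simp)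
  finally show "1 / ?S * ?V \<le> Kmax * Emax * \<eta>0 * \<delta> / (Kmin * Emin * b0 * (1 - \<gamma>\<^sup>2 / \<delta>) * \<gamma> ^ M)" .
qed

lemma geometric_schedule_bounds:
  assumes pos: "\<And>m. 0 < K m" "\<And>m. 0 < E m"
    and bdd: "bdd_above (range K)" "bdd_above (range E)"
    and \<eta>_sched: "\<And>m t. t \<in> stage K E m \<Longrightarrow> \<eta> t = \<gamma> ^ sched_exp K E m t * \<eta>0"
    and b_sched: "\<And>m t. t \<in> stage K E m \<Longrightarrow> real (b t) = \<delta> ^ sched_exp K E m t * b0"
    and "1 < \<delta>" "0 < \<gamma>" "\<gamma>\<^sup>2 < \<delta>" "0 < b0" "0 < \<eta>0"
  shows "0 < b t"
    and "0 < (\<Sum>t<stage_end K E M. \<eta> t)"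
    and "1 / (\<Sum>t<stage_end K E M. \<eta> t)
           \<le> \<delta> / (\<eta>0 * real (Inf (range K)) * real (Inf (range E)) * \<gamma> ^ M)"
    and "1 / (\<Sum>t<stage_end K E M. \<eta> t) * (\<Sum>t<stage_end K E M. (\<eta> t)\<^sup>2 / real (b t))
           \<le> real (Sup (range K)) * real (Sup (range E)) * \<eta>0 * \<delta>
               / (real (Inf (range K)) * real (Inf (range E)) * b0 * (1 - \<gamma>\<^sup>2 / \<delta>) * \<gamma> ^ M)"
proof -
  have KE_pos: "\<And>m. 0 < K m * E m" using pos by simp
  have \<eta>: "\<eta> t = \<gamma> ^ m * \<eta>0" and b: "real (b t) = \<delta> ^ m * b0" if "t \<in> stage K E m" for m t
    using \<eta>_sched[OF that] b_sched[OF that] sched_exp_on_stage[of K E, OF KE_pos that] by auto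
  obtain m where "t \<in> stage K E m" using ex_stage[of K E t, OF KE_pos] by blast
  with b have "real (b t) = \<delta> ^ m * b0" by blast
  moreover have "0 < \<delta> ^ m * b0" using assms(7,10) by simp
  ultimately show "0 < b t" by simp
  have "Inf (range K) \<in> range K" "Inf (range E) \<in> range E" by (auto intro: Inf_nat_def1)
  then have "0 < real (Inf (range K))" "0 < real (Inf (range E))" using pos by auto
  moreover have "real (Inf (range K)) \<le> K m" "K m \<le> real (Sup (range K))"
    and "real (Inf (range E)) \<le> E m" "E m \<le> real (Sup (range E))" for m
    using bdd by (auto intro: cInf_lower cSup_upper)
  ultimately show "0 < (\<Sum>t<stage_end K E M. \<eta> t)"
    and "1 / (\<Sum>t<stage_end K E M. \<eta> t)
           \<le> \<delta> / (\<eta>0 * real (Inf (range K)) * real (Inf (range E)) * \<gamma> ^ M)"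
    and "1 / (\<Sum>t<stage_end K E M. \<eta> t) * (\<Sum>t<stage_end K E M. (\<eta> t)\<^sup>2 / real (b t))
           \<le> real (Sup (range K)) * real (Sup (range E)) * \<eta>0 * \<delta>
               / (real (Inf (range K)) * real (Inf (range E)) * b0 * (1 - \<gamma>\<^sup>2 / \<delta>) * \<gamma> ^ M)"
    using stagewise_schedule_bounds[where K = K and E = E and \<eta> = \<eta> and b = b, OF \<eta> b] assms(7-11)
    by blast+
qed

lemma (in prob_space) nn_integral_indep_var_le:
  assumes indep: "indep_var M1 A M2 B"
    and H: "H \<in> borel_measurable (M1 \<Otimes>\<^sub>M M2)" and h: "h \<in> borel_measurable M1"
    and bound: "\<And>a. a \<in> space M1 \<Longrightarrow> (\<integral>\<^sup>+\<omega>. H (a, B \<omega>) \<partial>M) \<le> h a"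
  shows "(\<integral>\<^sup>+\<omega>. H (A \<omega>, B \<omega>) \<partial>M) \<le> (\<integral>\<^sup>+\<omega>. h (A \<omega>) \<partial>M)"
proof -
  have A: "A \<in> measurable M M1" and B: "B \<in> measurable M M2"
    and prod: "distr M M1 A \<Otimes>\<^sub>M distr M M2 B = distr M (M1 \<Otimes>\<^sub>M M2) (\<lambda>\<omega>. (A \<omega>, B \<omega>))"
    using indep indep_var_distribution_eq by blast+
  interpret B: prob_space "distr M M2 B" by (rule prob_space_distr[OF B])
  have "(\<integral>\<^sup>+\<omega>. H (A \<omega>, B \<omega>) \<partial>M) = (\<integral>\<^sup>+p. H p \<partial>(distr M M1 A \<Otimes>\<^sub>M distr M M2 B))"
    using H A B by (simp add: prod nn_integral_distr)
  also have "\<dots> = (\<integral>\<^sup>+a. (\<integral>\<^sup>+z. H (a, z) \<partial>distr M M2 B) \<partial>distr M M1 A)"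
    using H by (intro B.nn_integral_fst[symmetric]) simp
  also have "\<dots> \<le> (\<integral>\<^sup>+a. h a \<partial>distr M M1 A)"
  proof (rule nn_integral_mono)
    fix a assume "a \<in> space (distr M M1 A)"
    then have "a \<in> space M1" by simp
    moreover have "(\<lambda>z. H (a, z)) \<in> borel_measurable M2" using H \<open>a \<in> space M1\<close> by measurable
    ultimately show "(\<integral>\<^sup>+z. H (a, z) \<partial>distr M M2 B) \<le> h a"
      using B bound by (simp add: nn_integral_distr)
  qed
  also have "\<dots> = (\<integral>\<^sup>+\<omega>. h (A \<omega>) \<partial>M)" using h A by (simp add: nn_integral_distr)
  finally show ?thesis .
qed

lemma ennreal_telescoping_sum_le:
  fixes a u v :: "nat \<Rightarrow> ennreal"
  assumes step: "\<And>t. t < T \<Longrightarrow> a (Suc t) + u t \<le> a t + v t"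
  shows "(\<Sum>t<T. u t) \<le> a 0 + (\<Sum>t<T. v t)"
proof -
  have "a N + (\<Sum>t<N. u t) \<le> a 0 + (\<Sum>t<N. v t)" if "N \<le> T" for N
    using that
  proof (induction N)
    case (Suc N)
    have "a (Suc N) + (\<Sum>t<Suc N. u t) = (a (Suc N) + u N) + (\<Sum>t<N. u t)"
      by (simp add: ac_simps)
    also have "\<dots> \<le> (a N + v N) + (\<Sum>t<N. u t)"
      using step[of N] Suc.prems by (intro add_right_mono) simp
    also have "\<dots> = (a N + (\<Sum>t<N. u t)) + v N"
      by (simp add: ac_simps)
    also have "\<dots> \<le> (a 0 + (\<Sum>t<N. v t)) + v N"
      using Suc by (intro add_right_mono) simp
    finally show ?case by (simp add: ac_simps)
  qed simp
  from add_increasing[OF zero_le order_refl] this[OF order_refl]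
  show ?thesis by (rule order_trans)
qed

lemma ennreal_le_divide_of_mult_le:
  assumes "0 < s" "ennreal s * x \<le> ennreal B"
  shows "x \<le> ennreal (B / s)"
proof -
  have "x = ennreal (1 / s) * (ennreal s * x)"
    using assms(1) by (simp add: mult.assoc[symmetric] flip: ennreal_mult)
  also have "\<dots> \<le> ennreal (1 / s) * ennreal B"
    using assms(2) by (rule mult_left_mono) simp
  also have "\<dots> = ennreal (B / s)"
    using assms(1) by (simp flip: ennreal_mult')
  finally show ?thesis .
qed

lemma (in prob_space) nn_integral_le_sqrt_of_second_moment:
  fixes f :: "'a \<Rightarrow> real"
  assumes f: "f \<in> borel_measurable M" "\<And>x. 0 \<le> f x"
    and second_moment: "(\<integral>\<^sup>+x. ennreal ((f x)\<^sup>2) \<partial>M) \<le> ennreal c"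
  shows "(\<integral>\<^sup>+x. ennreal (f x) \<partial>M) \<le> ennreal (sqrt c)"
proof -
  define I where "I = (\<integral>\<^sup>+x. ennreal (f x) \<partial>M)"
  have "I\<^sup>2 \<le> (\<integral>\<^sup>+x. ennreal (f x) ^ 2 \<partial>M) * (\<integral>\<^sup>+x. 1 ^ 2 \<partial>M)"
    unfolding I_def using Cauchy_Schwarz_nn_integral[of "\<lambda>x. ennreal (f x)" M "\<lambda>_. 1"] f(1)
    by simp
  also have "(\<integral>\<^sup>+x. ennreal (f x) ^ 2 \<partial>M) = (\<integral>\<^sup>+x. ennreal ((f x)\<^sup>2) \<partial>M)"
    using f(2) by (simp add: ennreal_power)
  also have "(\<integral>\<^sup>+x. 1 ^ 2 \<partial>M) = (1 :: ennreal)"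
    by (simp add: emeasure_space_1)
  finally have "I\<^sup>2 \<le> ennreal c" using second_moment by simp
  moreover obtain r where r: "I = ennreal r" "0 \<le> r"
    using calculation by (cases I rule: ennreal_cases) (auto simp: top_unique)
  ultimately have "ennreal (r\<^sup>2) \<le> ennreal c" by (simp add: ennreal_power)
  then have "ennreal r \<le> ennreal (sqrt c)"
    using r(2) by (cases "0 \<le> c") (auto simp: ennreal_le_iff2 real_le_rsqrt)
  then show ?thesis using r unfolding I_def by simp
qed

lemma (in prob_space) Min_nn_integral_le_sqrt:
  fixes f :: "'i \<Rightarrow> 'a \<Rightarrow> real"
  assumes "finite A" "A \<noteq> {}" "\<And>t. t \<in> A \<Longrightarrow> f t \<in> borel_measurable M" "\<And>t x. 0 \<le> f t x"
    and "Min ((\<lambda>t. \<integral>\<^sup>+x. ennreal ((f t x)\<^sup>2) \<partial>M) ` A) \<le> ennreal c"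
  shows "Min ((\<lambda>t. \<integral>\<^sup>+x. ennreal (f t x) \<partial>M) ` A) \<le> ennreal (sqrt c)"
proof -
  have "Min ((\<lambda>t. \<integral>\<^sup>+x. ennreal ((f t x)\<^sup>2) \<partial>M) ` A) \<in> (\<lambda>t. \<integral>\<^sup>+x. ennreal ((f t x)\<^sup>2) \<partial>M) ` A"
    using assms(1,2) by (intro Min_in) auto
  then obtain t where t: "t \<in> A"
    and "Min ((\<lambda>t. \<integral>\<^sup>+x. ennreal ((f t x)\<^sup>2) \<partial>M) ` A) = (\<integral>\<^sup>+x. ennreal ((f t x)\<^sup>2) \<partial>M)"
    by blast
  with assms have "(\<integral>\<^sup>+x. ennreal (f t x) \<partial>M) \<le> ennreal (sqrt c)"
    by (intro nn_integral_le_sqrt_of_second_moment) auto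
  with t assms(1) show ?thesis by (meson Min_le finite_imageI image_eqI order_trans)
qed

section \<open>Mini-batch oracle and SGD iterates\<close>

text \<open>The iterate as a function of the array of all samples; it only reads the samples of earlier
  steps, which makes it independent of the current batch.\<close>
definition sgd_of_samples ::
    "'a::real_normed_vector \<Rightarrow> (nat \<Rightarrow> real) \<Rightarrow> (nat \<Rightarrow> nat) \<Rightarrow> ('b \<Rightarrow> 'a \<Rightarrow> 'a)
      \<Rightarrow> nat \<Rightarrow> (nat \<times> nat \<Rightarrow> 'b) \<Rightarrow> 'a" where
  "sgd_of_samples \<theta>0 \<eta> b G t w = sgd_iter \<theta>0 \<eta> b G (\<lambda>s i w. w (s, i)) t w"

lemma sgd_of_samples_Suc:
  "sgd_of_samples \<theta>0 \<eta> b G (Suc t) w = sgd_of_samples \<theta>0 \<eta> b G t w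
     - (\<eta> t / real (b t)) *\<^sub>R (\<Sum>i<b t. G (w (t, i)) (sgd_of_samples \<theta>0 \<eta> b G t w))"
  unfolding sgd_of_samples_def by simp

lemma sgd_iter_eq_sgd_of_samples:
  assumes "{p. fst p < t} \<subseteq> I"
  shows "sgd_iter \<theta>0 \<eta> b G \<xi> t \<omega> = sgd_of_samples \<theta>0 \<eta> b G t (restrict (\<lambda>p. (\<lambda>(s, i). \<xi> s i) p \<omega>) I)"
  using assms by (induction t) (auto simp: sgd_of_samples_def subset_iff)

locale minibatch_oracle = prob_space PS + D: prob_space D
  for PS :: "'w measure" and D :: "'b measure" +
  fixes G :: "'b \<Rightarrow> 'a::euclidean_space \<Rightarrow> 'a" and gF :: "'a \<Rightarrow> 'a"
    and \<sigma> :: real and \<xi> :: "nat \<Rightarrow> nat \<Rightarrow> 'w \<Rightarrow> 'b"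
  assumes G_measurable_pair: "(\<lambda>(x, y). G x y) \<in> borel_measurable (D \<Otimes>\<^sub>M borel)"
    and G_integrable: "\<And>y. integrable D (\<lambda>x. G x y)"
    and G_unbiased: "\<And>y. (\<integral>x. G x y \<partial>D) = gF y"
    and G_variance: "\<And>y. (\<integral>\<^sup>+x. ennreal ((norm (G x y - gF y))\<^sup>2) \<partial>D) \<le> ennreal (\<sigma>\<^sup>2)"
    and samples_indep: "indep_vars (\<lambda>_. D) (\<lambda>(t, i). \<xi> t i) UNIV"
    and samples_distr: "\<And>t i. distr PS D (\<xi> t i) = D"
begin

lemma measurable_G:
  assumes "f \<in> measurable N D" "g \<in> borel_measurable N"
  shows "(\<lambda>w. G (f w) (g w)) \<in> borel_measurable N"
  using measurable_compose[OF measurable_Pair[OF assms] G_measurable_pair] by simp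

lemma G_measurable: "(\<lambda>z. G z y) \<in> borel_measurable D"
  using measurable_G[OF measurable_ident_sets[OF refl] measurable_const] by simp

lemma gF_measurable: "gF \<in> borel_measurable borel"
proof -
  have "(\<lambda>(y, x). G x y) \<in> borel_measurable (borel \<Otimes>\<^sub>M D)"
    using G_measurable_pair by measurable
  from D.borel_measurable_lebesgue_integral[OF this] show ?thesis
    by (simp add: G_unbiased)
qed

lemma sample_measurable: "\<xi> t i \<in> measurable PS D"
  using samples_indep unfolding indep_vars_def by (auto dest: bspec[of _ _ "(t, i)"])

lemma
  shows integrable_sq_norm_G: "integrable D (\<lambda>z. (norm (G z y))\<^sup>2)"
    and integral_sq_norm_G_le: "(\<integral>z. (norm (G z y))\<^sup>2 \<partial>D) \<le> (norm (gF y))\<^sup>2 + \<sigma>\<^sup>2"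
proof -
  have G: "integrable D (\<lambda>z. G z y - gF y)" using G_integrable by simp
  have dev_measurable: "(\<lambda>z. (norm (G z y - gF y))\<^sup>2) \<in> borel_measurable D"
    using G_measurable by measurable
  have "(\<integral>\<^sup>+z. ennreal ((norm (G z y - gF y))\<^sup>2) \<partial>D) < \<infinity>"
    using G_variance[of y] by (simp add: le_less_trans)
  then have dev: "integrable D (\<lambda>z. (norm (G z y - gF y))\<^sup>2)"
    by (intro integrableI_nonneg dev_measurable) auto
  have "ennreal (\<integral>z. (norm (G z y - gF y))\<^sup>2 \<partial>D) = (\<integral>\<^sup>+z. ennreal ((norm (G z y - gF y))\<^sup>2) \<partial>D)"
    by (rule nn_integral_eq_integral[OF dev, symmetric]) auto
  also have "\<dots> \<le> ennreal (\<sigma>\<^sup>2)" by (rule G_variance)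
  finally have dev_le: "(\<integral>z. (norm (G z y - gF y))\<^sup>2 \<partial>D) \<le> \<sigma>\<^sup>2"
    by (simp add: ennreal_le_iff)
  have expand: "(norm (G z y))\<^sup>2 = (norm (G z y - gF y))\<^sup>2 + 2 * ((G z y - gF y) \<bullet> gF y) + (norm (gF y))\<^sup>2" for z
    by (simp add: power2_norm_eq_inner algebra_simps inner_commute)
  show "integrable D (\<lambda>z. (norm (G z y))\<^sup>2)"
    unfolding expand using dev G by auto
  have "(\<integral>z. (G z y - gF y) \<bullet> gF y \<partial>D) = 0"
    using G G_unbiased G_integrable by (simp add: D.prob_space)
  then show "(\<integral>z. (norm (G z y))\<^sup>2 \<partial>D) \<le> (norm (gF y))\<^sup>2 + \<sigma>\<^sup>2"
    unfolding expand using dev G dev_le by (simp add: D.prob_space)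
qed

lemma
  fixes f :: "'b \<Rightarrow> 'c::{banach, second_countable_topology}"
  assumes "f \<in> borel_measurable D"
  shows integrable_sample_iff: "integrable PS (\<lambda>\<omega>. f (\<xi> t i \<omega>)) \<longleftrightarrow> integrable D f"
    and integral_sample: "(\<integral>\<omega>. f (\<xi> t i \<omega>) \<partial>PS) = (\<integral>z. f z \<partial>D)"
  using integrable_distr_eq[OF sample_measurable assms] integral_distr[OF sample_measurable assms]
  by (simp_all add: samples_distr)

lemma
  shows integrable_G_sample: "integrable PS (\<lambda>\<omega>. G (\<xi> t i \<omega>) x)"
    and integral_G_sample: "(\<integral>\<omega>. G (\<xi> t i \<omega>) x \<partial>PS) = gF x"
  using integrable_sample_iff[OF G_measurable] integral_sample[OF G_measurable] G_integrable G_unbiased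
  by auto

lemma
  shows integrable_sq_norm_G_sample: "integrable PS (\<lambda>\<omega>. (norm (G (\<xi> t i \<omega>) x))\<^sup>2)"
    and integral_sq_norm_G_sample_le: "(\<integral>\<omega>. (norm (G (\<xi> t i \<omega>) x))\<^sup>2 \<partial>PS) \<le> (norm (gF x))\<^sup>2 + \<sigma>\<^sup>2"
proof -
  have "(\<lambda>z. (norm (G z x))\<^sup>2) \<in> borel_measurable D" using G_measurable by measurable
  from integrable_sample_iff[OF this] integral_sample[OF this]
  show "integrable PS (\<lambda>\<omega>. (norm (G (\<xi> t i \<omega>) x))\<^sup>2)"
    and "(\<integral>\<omega>. (norm (G (\<xi> t i \<omega>) x))\<^sup>2 \<partial>PS) \<le> (norm (gF x))\<^sup>2 + \<sigma>\<^sup>2"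
    using integrable_sq_norm_G integral_sq_norm_G_le by auto
qed

lemma integrable_inner_G_samples: "integrable PS (\<lambda>\<omega>. G (\<xi> t i \<omega>) x \<bullet> G (\<xi> s j \<omega>) x)"
proof (rule Bochner_Integration.integrable_bound)
  show "integrable PS (\<lambda>\<omega>. (norm (G (\<xi> t i \<omega>) x))\<^sup>2 + (norm (G (\<xi> s j \<omega>) x))\<^sup>2)"
    using integrable_sq_norm_G_sample by auto
  show "(\<lambda>\<omega>. G (\<xi> t i \<omega>) x \<bullet> G (\<xi> s j \<omega>) x) \<in> borel_measurable PS"
    using measurable_G[OF sample_measurable measurable_const] by measurable
  have "\<bar>u \<bullet> v\<bar> \<le> (norm u)\<^sup>2 + (norm v)\<^sup>2" for u v :: 'a
  proof -
    have "2 * (norm u * norm v) \<le> (norm u)\<^sup>2 + (norm v)\<^sup>2"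
      using sum_squares_bound[of "norm u" "norm v"] by (simp add: mult.assoc)
    then show ?thesis
      using Cauchy_Schwarz_ineq2[of u v] mult_nonneg_nonneg[OF norm_ge_zero norm_ge_zero, of u v]
      by linarith
  qed
  then show "AE \<omega> in PS. norm (G (\<xi> t i \<omega>) x \<bullet> G (\<xi> s j \<omega>) x)
      \<le> norm ((norm (G (\<xi> t i \<omega>) x))\<^sup>2 + (norm (G (\<xi> s j \<omega>) x))\<^sup>2)"
    by simp
qed

text \<open>Independence only factors products of real random variables, so the inner product is
  expanded in the basis.\<close>
lemma integral_inner_G_samples:
  assumes "i \<noteq> j"
  shows "(\<integral>\<omega>. G (\<xi> t i \<omega>) x \<bullet> G (\<xi> t j \<omega>) x \<partial>PS) = (norm (gF x))\<^sup>2"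
proof -
  let ?X = "\<lambda>i \<omega>. restrict (\<lambda>p. (\<lambda>(t, i). \<xi> t i) p \<omega>) {(t, i)}"
  have indep: "indep_var (PiM {(t, i)} (\<lambda>_. D)) (?X i) (PiM {(t, j)} (\<lambda>_. D)) (?X j)"
    using assms by (intro indep_var_restrict[OF samples_indep]) auto
  have component: "(\<lambda>w. G (w (t, k)) x \<bullet> v) \<in> borel_measurable (PiM {(t, k)} (\<lambda>_. D))" for k v
    using measurable_G[OF measurable_component_singleton[of "(t, k)"] measurable_const] by measurable
  have indep_coord: "indep_var borel (\<lambda>\<omega>. G (\<xi> t i \<omega>) x \<bullet> v) borel (\<lambda>\<omega>. G (\<xi> t j \<omega>) x \<bullet> v)" for v
    using indep_var_compose[OF indep component component] by (simp add: comp_def)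
  have "(\<integral>\<omega>. G (\<xi> t i \<omega>) x \<bullet> G (\<xi> t j \<omega>) x \<partial>PS)
      = (\<integral>\<omega>. (\<Sum>v\<in>Basis. (G (\<xi> t i \<omega>) x \<bullet> v) * (G (\<xi> t j \<omega>) x \<bullet> v)) \<partial>PS)"
    by (subst euclidean_inner) (rule refl)
  also have "\<dots> = (\<Sum>v\<in>Basis. (\<integral>\<omega>. (G (\<xi> t i \<omega>) x \<bullet> v) * (G (\<xi> t j \<omega>) x \<bullet> v) \<partial>PS))"
    by (intro Bochner_Integration.integral_sum indep_var_integrable[OF indep_coord]
        integrable_inner_left integrable_G_sample)
  also have "\<dots> = (\<Sum>v\<in>Basis. (gF x \<bullet> v) * (gF x \<bullet> v))"
    by (intro sum.cong refl)
       (simp add: indep_var_lebesgue_integral[OF indep_coord] integrable_G_sample integral_G_sample)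
  also have "\<dots> = (norm (gF x))\<^sup>2"
    by (simp only: power2_norm_eq_inner euclidean_inner[of "gF x" "gF x"])
  finally show ?thesis .
qed

lemma
  shows integrable_sq_norm_minibatch: "integrable PS (\<lambda>\<omega>. (norm (\<Sum>i<k. G (\<xi> t i \<omega>) x))\<^sup>2)"
    and integral_sq_norm_minibatch_le:
      "(\<integral>\<omega>. (norm (\<Sum>i<k. G (\<xi> t i \<omega>) x))\<^sup>2 \<partial>PS) \<le> (real k)\<^sup>2 * (norm (gF x))\<^sup>2 + real k * \<sigma>\<^sup>2"
proof -
  have expand: "(norm (\<Sum>i<k. G (\<xi> t i \<omega>) x))\<^sup>2 = (\<Sum>i<k. \<Sum>j<k. G (\<xi> t i \<omega>) x \<bullet> G (\<xi> t j \<omega>) x)" for \<omega>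
    by (simp add: power2_norm_eq_inner inner_sum_left inner_sum_right) (rule sum.swap)
  show "integrable PS (\<lambda>\<omega>. (norm (\<Sum>i<k. G (\<xi> t i \<omega>) x))\<^sup>2)"
    unfolding expand using integrable_inner_G_samples by auto
  have "(\<integral>\<omega>. G (\<xi> t i \<omega>) x \<bullet> G (\<xi> t j \<omega>) x \<partial>PS) \<le> (norm (gF x))\<^sup>2 + (if i = j then \<sigma>\<^sup>2 else 0)"
    for i j
    using integral_sq_norm_G_sample_le[of t i x] integral_inner_G_samples[of i j t x]
    by (cases "i = j") (simp_all add: power2_norm_eq_inner)
  then have "(\<Sum>i<k. \<Sum>j<k. (\<integral>\<omega>. G (\<xi> t i \<omega>) x \<bullet> G (\<xi> t j \<omega>) x \<partial>PS))
      \<le> (\<Sum>i<k. \<Sum>j<k. (norm (gF x))\<^sup>2 + (if i = j then \<sigma>\<^sup>2 else 0))"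
    by (intro sum_mono)
  also have "\<dots> = (real k)\<^sup>2 * (norm (gF x))\<^sup>2 + real k * \<sigma>\<^sup>2"
    by (simp add: sum.distrib power2_eq_square algebra_simps)
  finally show "(\<integral>\<omega>. (norm (\<Sum>i<k. G (\<xi> t i \<omega>) x))\<^sup>2 \<partial>PS) \<le> (real k)\<^sup>2 * (norm (gF x))\<^sup>2 + real k * \<sigma>\<^sup>2"
    unfolding expand using integrable_inner_G_samples by simp
qed

lemma integral_inner_minibatch:
  "(\<integral>\<omega>. v \<bullet> (\<Sum>i<k. G (\<xi> t i \<omega>) x) \<partial>PS) = real k * (v \<bullet> gF x)"
  using integrable_G_sample by (simp add: inner_sum_right integral_G_sample)

lemma sgd_of_samples_measurable:
  "{p. fst p < t} \<subseteq> I \<Longrightarrow> sgd_of_samples \<theta>0 \<eta> b G t \<in> borel_measurable (PiM I (\<lambda>_. D))"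
proof (induction t)
  case (Suc t)
  then have IH: "sgd_of_samples \<theta>0 \<eta> b G t \<in> borel_measurable (PiM I (\<lambda>_. D))" by force
  have "(t, i) \<in> I" for i using Suc.prems by auto
  from measurable_G[OF measurable_component_singleton[OF this] IH]
  have "(\<lambda>w. sgd_of_samples \<theta>0 \<eta> b G (Suc t) w) \<in> borel_measurable (PiM I (\<lambda>_. D))"
    unfolding sgd_of_samples_Suc
    by (intro borel_measurable_diff borel_measurable_scaleR borel_measurable_const
        borel_measurable_sum IH)
  then show ?case by simp
next
  case 0
  have "(\<lambda>w. sgd_of_samples \<theta>0 \<eta> b G 0 w) \<in> borel_measurable (PiM I (\<lambda>_. D))"
    by (simp add: sgd_of_samples_def)
  then show ?case by simp
qed

lemma sgd_iter_measurable: "sgd_iter \<theta>0 \<eta> b G \<xi> t \<in> borel_measurable PS"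
  by (induction t)
     (simp_all add: borel_measurable_diff borel_measurable_scaleR borel_measurable_sum
        measurable_G[OF sample_measurable])

lemma min_expected_grad_norm_le_sqrt:
  assumes "0 < T"
    and "Min ((\<lambda>t. \<integral>\<^sup>+\<omega>. ennreal ((norm (gF (sgd_iter \<theta>0 \<eta> b G \<xi> t \<omega>)))\<^sup>2) \<partial>PS) ` {..<T})
           \<le> ennreal c"
  shows "Min ((\<lambda>t. \<integral>\<^sup>+\<omega>. ennreal (norm (gF (sgd_iter \<theta>0 \<eta> b G \<xi> t \<omega>))) \<partial>PS) ` {..<T})
           \<le> ennreal (sqrt c)"
proof (rule Min_nn_integral_le_sqrt)
  show "(\<lambda>\<omega>. norm (gF (sgd_iter \<theta>0 \<eta> b G \<xi> t \<omega>))) \<in> borel_measurable PS" for t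
    using sgd_iter_measurable gF_measurable by measurable
qed (use assms in auto)

end

section \<open>Expected descent\<close>

locale smooth_sgd = minibatch_oracle +
  fixes F and Lb fstar :: real
  assumes descent: "\<And>x y. F y \<le> F x + gF x \<bullet> (y - x) + Lb / 2 * (norm (y - x))\<^sup>2"
    and lower_bound: "\<And>x. fstar \<le> F x"
    and F_measurable: "F \<in> borel_measurable borel"
    and Lb_nonneg: "0 \<le> Lb"
begin

lemma expected_descent_at:
  assumes "0 < k" "0 \<le> \<eta>" "Lb * \<eta> \<le> 2"
  shows "(\<integral>\<^sup>+\<omega>. ennreal (F (x - (\<eta> / k) *\<^sub>R (\<Sum>i<k. G (\<xi> t i \<omega>) x)) - fstar
              + (\<eta> - Lb * \<eta>\<^sup>2 / 2) * (norm (gF x))\<^sup>2) \<partial>PS)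
         \<le> ennreal (F x - fstar + Lb * \<eta>\<^sup>2 * \<sigma>\<^sup>2 / (2 * real k))"
proof -
  define a where "a = \<eta> / k"
  define S where "S \<omega> = (\<Sum>i<k. G (\<xi> t i \<omega>) x)" for \<omega>
  define Q where "Q \<omega> = F x - fstar - a * (gF x \<bullet> S \<omega>) + Lb / 2 * a\<^sup>2 * (norm (S \<omega>))\<^sup>2" for \<omega>
  define c where "c = (\<eta> - Lb * \<eta>\<^sup>2 / 2) * (norm (gF x))\<^sup>2"
  have pointwise: "F (x - a *\<^sub>R S \<omega>) - fstar \<le> Q \<omega>" for \<omega>
    using descent[where x = x and y = "x - a *\<^sub>R S \<omega>"] by (simp add: Q_def power_mult_distrib)
  have integrable_S: "integrable PS (\<lambda>\<omega>. gF x \<bullet> S \<omega>)" "integrable PS (\<lambda>\<omega>. (norm (S \<omega>))\<^sup>2)"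
    unfolding S_def using integrable_sq_norm_minibatch integrable_G_sample
    by (auto simp: inner_sum_right)
  then have integrable_Q: "integrable PS Q"
    unfolding Q_def by auto
  have "(\<integral>\<omega>. gF x \<bullet> S \<omega> \<partial>PS) = k * (norm (gF x))\<^sup>2"
    unfolding S_def by (simp add: integral_inner_minibatch power2_norm_eq_inner)
  then have "(\<integral>\<omega>. Q \<omega> \<partial>PS) = F x - fstar - a * k * (norm (gF x))\<^sup>2 + Lb / 2 * a\<^sup>2 * (\<integral>\<omega>. (norm (S \<omega>))\<^sup>2 \<partial>PS)"
    unfolding Q_def using integrable_S by (simp add: prob_space)
  also have "\<dots> \<le> F x - fstar - a * k * (norm (gF x))\<^sup>2 + Lb / 2 * a\<^sup>2 * ((real k)\<^sup>2 * (norm (gF x))\<^sup>2 + real k * \<sigma>\<^sup>2)"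
    unfolding S_def using Lb_nonneg by (intro add_left_mono mult_left_mono integral_sq_norm_minibatch_le) auto
  also have "\<dots> = F x - fstar - c + Lb * \<eta>\<^sup>2 * \<sigma>\<^sup>2 / (2 * real k)"
    unfolding a_def c_def using assms by (simp add: field_simps power2_eq_square)
  finally have integral_Q: "(\<integral>\<omega>. Q \<omega> + c \<partial>PS) \<le> F x - fstar + Lb * \<eta>\<^sup>2 * \<sigma>\<^sup>2 / (2 * real k)"
    using integrable_Q by (simp add: prob_space)
  have "(\<integral>\<^sup>+\<omega>. ennreal (F (x - a *\<^sub>R S \<omega>) - fstar + c) \<partial>PS) \<le> (\<integral>\<^sup>+\<omega>. ennreal (Q \<omega> + c) \<partial>PS)"
    using pointwise by (intro nn_integral_mono ennreal_leI) simp
  also have "\<dots> = ennreal (\<integral>\<omega>. Q \<omega> + c \<partial>PS)"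
  proof (rule nn_integral_eq_integral)
    have "0 \<le> c" unfolding c_def using descent_coefficient_nonneg[OF assms(2,3)] by simp
    then have "0 \<le> Q \<omega> + c" for \<omega>
      using pointwise[of \<omega>] lower_bound[of "x - a *\<^sub>R S \<omega>"] by linarith
    then show "AE \<omega> in PS. 0 \<le> Q \<omega> + c" by simp
  qed (use integrable_Q in auto)
  also have "\<dots> \<le> ennreal (F x - fstar + Lb * \<eta>\<^sup>2 * \<sigma>\<^sup>2 / (2 * real k))"
    using integral_Q by (rule ennreal_leI)
  finally show ?thesis unfolding a_def S_def c_def .
qed

text \<open>Conditioning on the past: the iterate is a measurable function of the samples of earlier
  steps, which are independent of the current batch, so the bound at a fixed point integrates.\<close>
lemma expected_descent_step_combined:
  assumes "0 < b t" "0 \<le> \<eta> t" "Lb * \<eta> t \<le> 2"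
  shows "(\<integral>\<^sup>+\<omega>. ennreal (F (sgd_iter \<theta>0 \<eta> b G \<xi> (Suc t) \<omega>) - fstar
              + (\<eta> t - Lb * (\<eta> t)\<^sup>2 / 2) * (norm (gF (sgd_iter \<theta>0 \<eta> b G \<xi> t \<omega>)))\<^sup>2) \<partial>PS)
       \<le> (\<integral>\<^sup>+\<omega>. ennreal (F (sgd_iter \<theta>0 \<eta> b G \<xi> t \<omega>) - fstar + Lb * (\<eta> t)\<^sup>2 * \<sigma>\<^sup>2 / (2 * real (b t))) \<partial>PS)"
proof -
  define I1 where "I1 = {p :: nat \<times> nat. fst p < t}"
  define I2 where "I2 = {p :: nat \<times> nat. fst p = t}"
  define past where "past \<omega> = restrict (\<lambda>p. (\<lambda>(s, i). \<xi> s i) p \<omega>) I1" for \<omega>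
  define batch where "batch \<omega> = restrict (\<lambda>p. (\<lambda>(s, i). \<xi> s i) p \<omega>) I2" for \<omega>
  define \<Theta> where "\<Theta> = sgd_of_samples \<theta>0 \<eta> b G t"
  define next_iter where
    "next_iter p = \<Theta> (fst p) - (\<eta> t / real (b t)) *\<^sub>R (\<Sum>i<b t. G (snd p (t, i)) (\<Theta> (fst p)))" for p
  define H where "H p = ennreal (F (next_iter p) - fstar
    + (\<eta> t - Lb * (\<eta> t)\<^sup>2 / 2) * (norm (gF (\<Theta> (fst p))))\<^sup>2)" for p
  have indep: "indep_var (PiM I1 (\<lambda>_. D)) past (PiM I2 (\<lambda>_. D)) batch"
    unfolding past_def batch_def I1_def I2_def by (rule indep_var_restrict[OF samples_indep]) auto
  have \<Theta>_measurable: "\<Theta> \<in> borel_measurable (PiM I1 (\<lambda>_. D))"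
    unfolding \<Theta>_def I1_def by (rule sgd_of_samples_measurable) simp
  have iter_t: "sgd_iter \<theta>0 \<eta> b G \<xi> t \<omega> = \<Theta> (past \<omega>)" for \<omega>
    unfolding \<Theta>_def past_def I1_def by (rule sgd_iter_eq_sgd_of_samples) simp
  have iter_Suc: "sgd_iter \<theta>0 \<eta> b G \<xi> (Suc t) \<omega> = next_iter (past \<omega>, batch \<omega>)" for \<omega>
    by (simp add: next_iter_def iter_t batch_def I2_def)
  have "(\<lambda>p. G (snd p (t, i)) (\<Theta> (fst p))) \<in> borel_measurable (PiM I1 (\<lambda>_. D) \<Otimes>\<^sub>M PiM I2 (\<lambda>_. D))" for i
    using \<Theta>_measurable
    by (intro measurable_G measurable_compose[OF measurable_snd measurable_component_singleton]
        measurable_compose[OF measurable_fst]) (auto simp: I2_def)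
  then have "H \<in> borel_measurable (PiM I1 (\<lambda>_. D) \<Otimes>\<^sub>M PiM I2 (\<lambda>_. D))"
    unfolding H_def next_iter_def
    using \<Theta>_measurable F_measurable gF_measurable by measurable
  then have "(\<integral>\<^sup>+\<omega>. H (past \<omega>, batch \<omega>) \<partial>PS)
      \<le> (\<integral>\<^sup>+\<omega>. ennreal (F (\<Theta> (past \<omega>)) - fstar + Lb * (\<eta> t)\<^sup>2 * \<sigma>\<^sup>2 / (2 * real (b t))) \<partial>PS)"
  proof (rule nn_integral_indep_var_le[OF indep])
    show "(\<lambda>a. ennreal (F (\<Theta> a) - fstar + Lb * (\<eta> t)\<^sup>2 * \<sigma>\<^sup>2 / (2 * real (b t))))
        \<in> borel_measurable (PiM I1 (\<lambda>_. D))"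
      using \<Theta>_measurable F_measurable by measurable
    show "(\<integral>\<^sup>+\<omega>. H (a, batch \<omega>) \<partial>PS) \<le> ennreal (F (\<Theta> a) - fstar + Lb * (\<eta> t)\<^sup>2 * \<sigma>\<^sup>2 / (2 * real (b t)))"
      for a
      unfolding H_def next_iter_def
      using expected_descent_at[OF assms, of "\<Theta> a" t] by (simp add: batch_def I2_def)
  qed
  then show ?thesis by (simp add: H_def flip: iter_Suc iter_t del: sgd_iter.simps)
qed

lemma expected_descent_step:
  assumes "0 < b t" "0 \<le> \<eta> t" "Lb * \<eta> t \<le> 2"
  shows "(\<integral>\<^sup>+\<omega>. ennreal (F (sgd_iter \<theta>0 \<eta> b G \<xi> (Suc t) \<omega>) - fstar) \<partial>PS)
         + ennreal (\<eta> t - Lb * (\<eta> t)\<^sup>2 / 2) * (\<integral>\<^sup>+\<omega>. ennreal ((norm (gF (sgd_iter \<theta>0 \<eta> b G \<xi> t \<omega>)))\<^sup>2) \<partial>PS)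
       \<le> (\<integral>\<^sup>+\<omega>. ennreal (F (sgd_iter \<theta>0 \<eta> b G \<xi> t \<omega>) - fstar) \<partial>PS)
         + ennreal (Lb * (\<eta> t)\<^sup>2 * \<sigma>\<^sup>2 / (2 * real (b t)))"
proof -
  have "(\<lambda>\<omega>. ennreal (F (sgd_iter \<theta>0 \<eta> b G \<xi> s \<omega>) - fstar)) \<in> borel_measurable PS"
    and "(\<lambda>\<omega>. ennreal ((norm (gF (sgd_iter \<theta>0 \<eta> b G \<xi> s \<omega>)))\<^sup>2)) \<in> borel_measurable PS" for s
    using sgd_iter_measurable F_measurable gF_measurable by measurable
  moreover have "0 \<le> \<eta> t - Lb * (\<eta> t)\<^sup>2 / 2" "0 \<le> Lb * (\<eta> t)\<^sup>2 * \<sigma>\<^sup>2 / (2 * real (b t))"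
    using descent_coefficient_nonneg[OF assms(2,3)] Lb_nonneg by auto
  ultimately show ?thesis
    using expected_descent_step_combined[of b t \<eta> \<theta>0, OF assms] lower_bound
    by (simp add: ennreal_plus ennreal_mult nn_integral_add nn_integral_cmult emeasure_space_1
        del: sgd_iter.simps)
qed

lemma sum_weighted_expected_sq_grad_le:
  assumes "\<And>t. t < T \<Longrightarrow> 0 < b t" "\<And>t. t < T \<Longrightarrow> 0 \<le> \<eta> t" "\<And>t. t < T \<Longrightarrow> Lb * \<eta> t \<le> 2"
  shows "(\<Sum>t<T. ennreal (\<eta> t - Lb * (\<eta> t)\<^sup>2 / 2)
             * (\<integral>\<^sup>+\<omega>. ennreal ((norm (gF (sgd_iter \<theta>0 \<eta> b G \<xi> t \<omega>)))\<^sup>2) \<partial>PS))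
           \<le> ennreal (F \<theta>0 - fstar + Lb * \<sigma>\<^sup>2 / 2 * (\<Sum>t<T. (\<eta> t)\<^sup>2 / real (b t)))"
proof -
  define a where "a t = (\<integral>\<^sup>+\<omega>. ennreal (F (sgd_iter \<theta>0 \<eta> b G \<xi> t \<omega>) - fstar) \<partial>PS)" for t
  define d where "d t = Lb * (\<eta> t)\<^sup>2 * \<sigma>\<^sup>2 / (2 * real (b t))" for t
  have "(\<Sum>t<T. ennreal (\<eta> t - Lb * (\<eta> t)\<^sup>2 / 2)
             * (\<integral>\<^sup>+\<omega>. ennreal ((norm (gF (sgd_iter \<theta>0 \<eta> b G \<xi> t \<omega>)))\<^sup>2) \<partial>PS))
        \<le> a 0 + (\<Sum>t<T. ennreal (d t))"
    unfolding a_def d_def using assms by (intro ennreal_telescoping_sum_le expected_descent_step) auto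
  also have "\<dots> = ennreal (F \<theta>0 - fstar + (\<Sum>t<T. d t))"
    using lower_bound Lb_nonneg by (simp add: a_def d_def emeasure_space_1 ennreal_plus sum_nonneg)
  also have "(\<Sum>t<T. d t) = Lb * \<sigma>\<^sup>2 / 2 * (\<Sum>t<T. (\<eta> t)\<^sup>2 / real (b t))"
    unfolding d_def sum_distrib_left by (intro sum.cong) auto
  finally show ?thesis .
qed

theorem min_expected_sq_grad_le:
  assumes b: "\<And>t. t < T \<Longrightarrow> 0 < b t"
    and \<eta>: "\<And>t. t < T \<Longrightarrow> 0 \<le> \<eta> t \<and> \<eta> t \<le> \<eta>max"
    and \<eta>max: "Lb * \<eta>max < 2"
    and sum_\<eta>: "0 < (\<Sum>t<T. \<eta> t)"
  shows "Min ((\<lambda>t. \<integral>\<^sup>+\<omega>. ennreal ((norm (gF (sgd_iter \<theta>0 \<eta> b G \<xi> t \<omega>)))\<^sup>2) \<partial>PS) ` {..<T})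
           \<le> ennreal (2 * (F \<theta>0 - fstar) / (2 - Lb * \<eta>max) * (1 / (\<Sum>t<T. \<eta> t))
                      + Lb * \<sigma>\<^sup>2 / (2 - Lb * \<eta>max) * (1 / (\<Sum>t<T. \<eta> t) * (\<Sum>t<T. (\<eta> t)\<^sup>2 / real (b t))))"
    (is "?min \<le> _")
proof -
  define \<kappa> where "\<kappa> = (2 - Lb * \<eta>max) / 2"
  have \<kappa>_pos: "0 < \<kappa>" using \<eta>max by (simp add: \<kappa>_def)
  have L\<eta>: "Lb * \<eta> t \<le> Lb * \<eta>max" if "t < T" for t
    using \<eta>[OF that] Lb_nonneg by (intro mult_left_mono) auto
  then have \<kappa>_le: "\<kappa> * \<eta> t \<le> \<eta> t - Lb * (\<eta> t)\<^sup>2 / 2" if "t < T" for t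
    using mult_left_mono[OF L\<eta>[OF that], of "\<eta> t"] \<eta>[OF that]
    by (simp add: \<kappa>_def power2_eq_square field_simps)
  have "ennreal (\<kappa> * (\<Sum>t<T. \<eta> t)) * ?min = (\<Sum>t<T. ennreal (\<kappa> * \<eta> t) * ?min)"
  proof -
    have "(\<Sum>t<T. ennreal (\<kappa> * \<eta> t)) = ennreal (\<Sum>t<T. \<kappa> * \<eta> t)"
      using \<kappa>_pos \<eta> by (intro sum_ennreal) simp
    then show ?thesis by (simp only: sum_distrib_left flip: sum_distrib_right)
  qed
  also have "\<dots> \<le> (\<Sum>t<T. ennreal (\<eta> t - Lb * (\<eta> t)\<^sup>2 / 2)
      * (\<integral>\<^sup>+\<omega>. ennreal ((norm (gF (sgd_iter \<theta>0 \<eta> b G \<xi> t \<omega>)))\<^sup>2) \<partial>PS))"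
    using \<kappa>_le by (intro sum_mono mult_mono ennreal_leI Min_le) auto
  also have "\<dots> \<le> ennreal (F \<theta>0 - fstar + Lb * \<sigma>\<^sup>2 / 2 * (\<Sum>t<T. (\<eta> t)\<^sup>2 / real (b t)))"
  proof (rule sum_weighted_expected_sq_grad_le)
    show "Lb * \<eta> t \<le> 2" if "t < T" for t using L\<eta>[OF that] \<eta>max by linarith
  qed (use b \<eta> in auto)
  finally have "?min \<le> ennreal ((F \<theta>0 - fstar + Lb * \<sigma>\<^sup>2 / 2 * (\<Sum>t<T. (\<eta> t)\<^sup>2 / real (b t)))
      / (\<kappa> * (\<Sum>t<T. \<eta> t)))"
    using \<kappa>_pos sum_\<eta> by (intro ennreal_le_divide_of_mult_le) auto
  also have "(F \<theta>0 - fstar + Lb * \<sigma>\<^sup>2 / 2 * (\<Sum>t<T. (\<eta> t)\<^sup>2 / real (b t))) / (\<kappa> * (\<Sum>t<T. \<eta> t))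
      = 2 * (F \<theta>0 - fstar) / (2 - Lb * \<eta>max) * (1 / (\<Sum>t<T. \<eta> t))
        + Lb * \<sigma>\<^sup>2 / (2 - Lb * \<eta>max) * (1 / (\<Sum>t<T. \<eta> t) * (\<Sum>t<T. (\<eta> t)\<^sup>2 / real (b t)))"
  proof -
    have alg: "(X + A / 2 * V) / (q / 2 * S) = 2 * X / q * (1 / S) + A / q * (1 / S * V)"
      if "S \<noteq> 0" "q \<noteq> 0" for X A V S q :: real
      using that by (simp add: field_simps)
    show ?thesis unfolding \<kappa>_def by (rule alg) (use \<eta>max sum_\<eta> in auto)
  qed
  finally show ?thesis .
qed

end

lemma smooth_sgd_finite_average:
  fixes fs :: "nat \<Rightarrow> 'a::euclidean_space \<Rightarrow> real"
  assumes "minibatch_oracle PS D G (\<lambda>x. (1 / real n) *\<^sub>R (\<Sum>i<n. gfs i x)) \<sigma> \<xi>"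
    and deriv: "\<And>i x. i < n \<Longrightarrow> (fs i has_derivative (\<lambda>h. gfs i x \<bullet> h)) (at x)"
    and lip: "\<And>i x y. i < n \<Longrightarrow> norm (gfs i x - gfs i y) \<le> L i * norm (x - y)"
    and L: "\<And>i. i < n \<Longrightarrow> 0 \<le> L i"
    and bdd: "\<And>i. i < n \<Longrightarrow> bdd_below (range (fs i))"
  shows "smooth_sgd PS D G (\<lambda>x. (1 / real n) *\<^sub>R (\<Sum>i<n. gfs i x)) \<sigma> \<xi>
           (\<lambda>x. (\<Sum>i<n. fs i x) / real n) ((\<Sum>i<n. L i) / real n) ((\<Sum>i<n. Inf (range (fs i))) / real n)"
proof (rule smooth_sgd.intro[OF assms(1)], unfold_locales)
  show "(\<Sum>i<n. fs i y) / real n \<le> (\<Sum>i<n. fs i x) / real n + ((1 / real n) *\<^sub>R (\<Sum>i<n. gfs i x)) \<bullet> (y - x)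
          + (\<Sum>i<n. L i) / real n / 2 * (norm (y - x))\<^sup>2" for x y
    by (rule average_descent_inequality[OF deriv lip])
  show "(\<Sum>i<n. Inf (range (fs i))) / real n \<le> (\<Sum>i<n. fs i x) / real n" for x
    using bdd by (intro divide_right_mono sum_mono cInf_lower) auto
  have "fs i \<in> borel_measurable borel" if "i < n" for i
    using deriv[OF that] by (intro borel_measurable_continuous_onI continuous_at_imp_continuous_on
        ballI has_derivative_continuous) blast
  then show "(\<lambda>x. (\<Sum>i<n. fs i x) / real n) \<in> borel_measurable borel"
    by (intro borel_measurable_divide borel_measurable_sum borel_measurable_const) auto
  show "0 \<le> (\<Sum>i<n. L i) / real n" using L by (intro divide_nonneg_nonneg sum_nonneg) auto
qed

theorem theorem3:
  fixes n :: nat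
    and fs :: "nat \<Rightarrow> 'a::euclidean_space \<Rightarrow> real"
    and gfs :: "nat \<Rightarrow> 'a \<Rightarrow> 'a"
    and L :: "nat \<Rightarrow> real"
    and D :: "'b measure"
    and G :: "'b \<Rightarrow> 'a \<Rightarrow> 'a"
    and \<sigma> :: real
    and PS :: "'w measure"
    and \<xi> :: "nat \<Rightarrow> nat \<Rightarrow> 'w \<Rightarrow> 'b"
    and K E :: "nat \<Rightarrow> nat"
    and \<delta> \<gamma> b0 \<eta>0 \<eta>min \<eta>max :: real
    and b :: "nat \<Rightarrow> nat"
    and \<eta> :: "nat \<Rightarrow> real"
    and \<theta>0 :: 'a
  defines "F \<equiv> \<lambda>x. (\<Sum>i<n. fs i x) / real n"
    and "gradF \<equiv> \<lambda>x. (1 / real n) *\<^sub>R (\<Sum>i<n. gfs i x)"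
    and "Lbar \<equiv> (\<Sum>i<n. L i) / real n"
    and "fstar \<equiv> (\<Sum>i<n. Inf (range (fs i))) / real n"
    and "Emax \<equiv> real (Sup (range E))"
    and "Kmax \<equiv> real (Sup (range K))"
    and "Emin \<equiv> real (Inf (range E))"
    and "Kmin \<equiv> real (Inf (range K))"
    and "\<theta> \<equiv> sgd_iter \<theta>0 \<eta> b G \<xi>"
    and "\<gamma>hat \<equiv> \<gamma>\<^sup>2 / \<delta>"
    and "BT \<equiv> \<lambda>M. 1 / (\<Sum>t<stage_end K E M. \<eta> t)"
    and "VT \<equiv> \<lambda>M. (1 / (\<Sum>t<stage_end K E M. \<eta> t)) * (\<Sum>t<stage_end K E M. (\<eta> t)\<^sup>2 / real (b t))"
  assumes n_pos: "n > 0"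
    and A1_diff: "\<forall>i<n. \<forall>x. (fs i has_derivative (\<lambda>h. gfs i x \<bullet> h)) (at x)"
    and A1_smooth: "\<forall>i<n. L i > 0 \<and> (\<forall>x y. norm (gfs i x - gfs i y) \<le> L i * norm (x - y))"
    and A1_bdd: "\<forall>i<n. bdd_below (range (fs i))"
    and A2_prob: "prob_space D"
    and A2_meas: "(\<lambda>(x, y). G x y) \<in> borel_measurable (D \<Otimes>\<^sub>M borel)"
    and A2_unbiased: "\<forall>y. integrable D (\<lambda>x. G x y) \<and> (\<integral>x. G x y \<partial>D) = gradF y"
    and A2_var: "\<forall>y. (\<integral>\<^sup>+x. ennreal ((norm (G x y - gradF y))\<^sup>2) \<partial>D) \<le> ennreal (\<sigma>\<^sup>2)"
    and A3_prob: "prob_space PS"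
    and A3_indep: "prob_space.indep_vars PS (\<lambda>_. D) (\<lambda>(t, i). \<xi> t i) UNIV"
    and A3_distr: "\<forall>t i. distr PS D (\<xi> t i) = D"
    and E_bdd: "bdd_above (range E)"
    and K_bdd: "bdd_above (range K)"
    and EK_pos: "\<forall>m. E m > 0 \<and> K m > 0"
    and \<delta>_gt: "\<delta> > 1"
    and \<gamma>_gt: "\<gamma> > 1"
    and \<gamma>\<delta>: "\<gamma>\<^sup>2 < \<delta>"
    and b0_pos: "b0 > 0"
    and \<eta>0_pos: "\<eta>0 > 0"
    and b_sched: "\<forall>m. \<forall>t\<in>stage K E m. real (b t) = \<delta> ^ sched_exp K E m t * b0"
    and \<eta>_sched: "\<forall>m. \<forall>t\<in>stage K E m. \<eta> t = \<gamma> ^ sched_exp K E m t * \<eta>0"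
    and \<eta>min_nn: "0 \<le> \<eta>min"
    and \<eta>max_lt: "\<eta>max < 2 / Lbar"
  shows "(\<forall>M. (\<forall>t<stage_end K E M. \<eta>min \<le> \<eta> t \<and> \<eta> t \<le> \<eta>max) \<longrightarrow>
           Min ((\<lambda>t. \<integral>\<^sup>+\<omega>. ennreal ((norm (gradF (\<theta> t \<omega>)))\<^sup>2) \<partial>PS) ` {..<stage_end K E M})
             \<le> ennreal (2 * (F \<theta>0 - fstar) / (2 - Lbar * \<eta>max) * BT M
                        + Lbar * \<sigma>\<^sup>2 / (2 - Lbar * \<eta>max) * VT M)
           \<and> BT M \<le> \<delta> / (\<eta>0 * Kmin * Emin * \<gamma> ^ M)
           \<and> VT M \<le> Kmax * Emax * \<eta>0 * \<delta> / (Kmin * Emin * b0 * (1 - \<gamma>hat) * \<gamma> ^ M))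
         \<and> (\<exists>C. \<forall>M. (\<forall>t<stage_end K E M. \<eta>min \<le> \<eta> t \<and> \<eta> t \<le> \<eta>max) \<longrightarrow>
           Min ((\<lambda>t. \<integral>\<^sup>+\<omega>. ennreal (norm (gradF (\<theta> t \<omega>))) \<partial>PS) ` {..<stage_end K E M})
             \<le> ennreal (C / \<gamma> powr (real M / 2)))"
proof -
  note F_def = assms(1) and gradF_def = assms(2) and Lbar_def = assms(3) and fstar_def = assms(4)
    and Emax_def = assms(5) and Kmax_def = assms(6) and Emin_def = assms(7) and Kmin_def = assms(8)
    and \<theta>_def = assms(9) and \<gamma>hat_def = assms(10) and BT_def = assms(11) and VT_def = assms(12)
  interpret smooth_sgd PS D G gradF \<sigma> \<xi> F Lbar fstar
    unfolding F_def gradF_def Lbar_def fstar_def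
  proof (rule smooth_sgd_finite_average)
    show "minibatch_oracle PS D G (\<lambda>x. (1 / real n) *\<^sub>R (\<Sum>i<n. gfs i x)) \<sigma> \<xi>"
      using A2_unbiased A2_var A3_distr unfolding gradF_def
      by (intro minibatch_oracle.intro[OF A3_prob A2_prob] minibatch_oracle_axioms.intro A2_meas A3_indep)
         simp_all
  qed (use A1_diff A1_smooth A1_bdd in auto)
  have "0 < Lbar" using n_pos A1_smooth unfolding Lbar_def by (intro divide_pos_pos sum_pos) auto
  with \<eta>max_lt have Lbar_\<eta>max: "Lbar * \<eta>max < 2" by (simp add: less_divide_eq mult.commute)
  note schedule = geometric_schedule_bounds[where K = K and E = E and \<eta> = \<eta> and b = b,
      OF _ _ K_bdd E_bdd \<eta>_sched[rule_format] b_sched[rule_format] \<delta>_gt _ \<gamma>\<delta> b0_pos \<eta>0_pos]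
  have b_pos: "0 < b t" and sum_pos: "0 < (\<Sum>t<stage_end K E M. \<eta> t)"
    and BT_le: "BT M \<le> \<delta> / (\<eta>0 * Kmin * Emin * \<gamma> ^ M)"
    and VT_le: "VT M \<le> Kmax * Emax * \<eta>0 * \<delta> / (Kmin * Emin * b0 * (1 - \<gamma>hat) * \<gamma> ^ M)" for t M
    unfolding BT_def VT_def Kmin_def Kmax_def Emin_def Emax_def \<gamma>hat_def
    using schedule EK_pos \<gamma>_gt by auto
  have min_bound: "Min ((\<lambda>t. \<integral>\<^sup>+\<omega>. ennreal ((norm (gradF (\<theta> t \<omega>)))\<^sup>2) \<partial>PS) ` {..<stage_end K E M})
      \<le> ennreal (2 * (F \<theta>0 - fstar) / (2 - Lbar * \<eta>max) * BT M + Lbar * \<sigma>\<^sup>2 / (2 - Lbar * \<eta>max) * VT M)"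
    if "\<forall>t<stage_end K E M. \<eta>min \<le> \<eta> t \<and> \<eta> t \<le> \<eta>max" for M
    unfolding BT_def VT_def \<theta>_def
    by (rule min_expected_sq_grad_le) (use that \<eta>min_nn b_pos Lbar_\<eta>max sum_pos in auto)
  define C where "C = 2 * (F \<theta>0 - fstar) / (2 - Lbar * \<eta>max) * (\<delta> / (\<eta>0 * Kmin * Emin))
    + Lbar * \<sigma>\<^sup>2 / (2 - Lbar * \<eta>max) * (Kmax * Emax * \<eta>0 * \<delta> / (Kmin * Emin * b0 * (1 - \<gamma>hat)))"
  have rate: "2 * (F \<theta>0 - fstar) / (2 - Lbar * \<eta>max) * BT M + Lbar * \<sigma>\<^sup>2 / (2 - Lbar * \<eta>max) * VT M
      \<le> C / \<gamma> ^ M" for M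
  proof -
    have "0 \<le> 2 * (F \<theta>0 - fstar) / (2 - Lbar * \<eta>max)" "0 \<le> Lbar * \<sigma>\<^sup>2 / (2 - Lbar * \<eta>max)"
      using lower_bound[of \<theta>0] Lbar_\<eta>max Lb_nonneg by auto
    then have "2 * (F \<theta>0 - fstar) / (2 - Lbar * \<eta>max) * BT M + Lbar * \<sigma>\<^sup>2 / (2 - Lbar * \<eta>max) * VT M
        \<le> 2 * (F \<theta>0 - fstar) / (2 - Lbar * \<eta>max) * (\<delta> / (\<eta>0 * Kmin * Emin * \<gamma> ^ M))
          + Lbar * \<sigma>\<^sup>2 / (2 - Lbar * \<eta>max) * (Kmax * Emax * \<eta>0 * \<delta> / (Kmin * Emin * b0 * (1 - \<gamma>hat) * \<gamma> ^ M))"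
      using BT_le VT_le by (intro add_mono mult_left_mono) auto
    also have "\<dots> = C / \<gamma> ^ M" by (simp add: C_def add_divide_distrib)
    finally show ?thesis .
  qed
  have "Min ((\<lambda>t. \<integral>\<^sup>+\<omega>. ennreal (norm (gradF (\<theta> t \<omega>))) \<partial>PS) ` {..<stage_end K E M})
      \<le> ennreal (sqrt (C / \<gamma> ^ M))"
    if prem: "\<forall>t<stage_end K E M. \<eta>min \<le> \<eta> t \<and> \<eta> t \<le> \<eta>max" for M
    unfolding \<theta>_def
  proof (rule min_expected_grad_norm_le_sqrt)
    show "0 < stage_end K E M" using EK_pos by (simp add: stage_end_eq)
    show "Min ((\<lambda>t. \<integral>\<^sup>+\<omega>. ennreal ((norm (gradF (sgd_iter \<theta>0 \<eta> b G \<xi> t \<omega>)))\<^sup>2) \<partial>PS)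
        ` {..<stage_end K E M}) \<le> ennreal (C / \<gamma> ^ M)"
      using min_bound[OF prem] ennreal_leI[OF rate[of M]] unfolding \<theta>_def by (rule order_trans)
  qed
  moreover have "sqrt (C / \<gamma> ^ M) = sqrt C / \<gamma> powr (real M / 2)" for M
    using \<gamma>_gt by (simp add: real_sqrt_divide powr_half_sqrt_powr powr_realpow)
  ultimately have "\<forall>M. (\<forall>t<stage_end K E M. \<eta>min \<le> \<eta> t \<and> \<eta> t \<le> \<eta>max) \<longrightarrow>
      Min ((\<lambda>t. \<integral>\<^sup>+\<omega>. ennreal (norm (gradF (\<theta> t \<omega>))) \<partial>PS) ` {..<stage_end K E M})
        \<le> ennreal (sqrt C / \<gamma> powr (real M / 2))"
    by simp
  then show ?thesis using min_bound BT_le VT_le by blast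
qed

end
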